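(* Let $N$ and $M$ be matroids on a common finite ground set $E$ such that every independent set of $M$ is independent in $N$. Then $N\ominus M=(N^*\vee M)^*$, i.e. the independent sets of $N\ominus M$ are exactly the independent sets of $(N^*\vee M)^*$.
   Context: For matroids $N,M$ on the same ground set $E$ with $\mathcal{L}(M)\subseteq\mathcal{L}(N)$, $N\ominus M=(E,\mathcal{L}(N\ominus M))$ where $\mathcal{L}(N\ominus M)=\{S: \exists$ a base $B_N$ of $N$ and a base $B_M$ of $M$ with $B_M\subseteq B_N$ and $S\subseteq B_N\setminus B_M\}$. The dual $N^*$ of a matroid $N$ on $E$ has as independent sets the subsets of $E\setminus B$ for bases $B$ of $N$. The union $A\vee B$ of matroids $A,B$ has ground set $E(A)\cup E(B)$ and independent sets $\{S\cup T: S\in\mathcal{L}(A),\ T\in\mathcal{L}(B)\}$. *)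

theory Defs
  imports Main
begin

definition matroid :: "'a set \<Rightarrow> 'a set set \<Rightarrow> bool" where
  "matroid E I \<longleftrightarrow>
     finite E \<and>
     (\<forall>X\<in>I. X \<subseteq> E) \<and>
     {} \<in> I \<and>
     (\<forall>X Y. X \<in> I \<and> Y \<subseteq> X \<longrightarrow> Y \<in> I) \<and>
     (\<forall>X Y. X \<in> I \<and> Y \<in> I \<and> card X < card Y \<longrightarrow> (\<exists>y\<in>Y - X. insert y X \<in> I))"

definition bases :: "'a set set \<Rightarrow> 'a set set" where
  "bases I = {B \<in> I. \<forall>X\<in>I. B \<subseteq> X \<longrightarrow> X = B}"

definition dual_indep :: "'a set \<Rightarrow> 'a set set \<Rightarrow> 'a set set" where
  "dual_indep E I = {S. \<exists>B\<in>bases I. S \<subseteq> E - B}"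

definition union_indep :: "'a set set \<Rightarrow> 'a set set \<Rightarrow> 'a set set" where
  "union_indep IA IB = {S \<union> T | S T. S \<in> IA \<and> T \<in> IB}"

definition ominus_indep :: "'a set set \<Rightarrow> 'a set set \<Rightarrow> 'a set set" where
  "ominus_indep IN IM =
     {S. \<exists>BN\<in>bases IN. \<exists>BM\<in>bases IM. BM \<subseteq> BN \<and> S \<subseteq> BN - BM}"

end

theory Submission
  imports Defs
begin

text \<open>For bases \<open>B\<close> of \<open>N\<close>, a set \<open>S \<union> T\<close> with \<open>S \<subseteq> E - B\<close> and \<open>T\<close> independent
  in \<open>M\<close> lies in \<open>(E - B) \<union> (T \<inter> B)\<close>, so independent sets of \<open>N\<^sup>* \<or> M\<close> have size at
  most \<open>|E| - r(N) + r(M)\<close>; the sets \<open>(E - B) \<union> B\<^sub>M\<close> with \<open>B\<^sub>M \<subseteq> B\<close> a base of \<open>M\<close>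
  attain this bound and are therefore bases of \<open>N\<^sup>* \<or> M\<close>. Conversely, a base of \<open>N\<^sup>* \<or> M\<close>
  has the form \<open>(E - B) \<union> J\<close> with \<open>J \<subseteq> B\<close> independent in \<open>M\<close>, and \<open>J\<close> is a base of
  \<open>M\<close>: otherwise some \<open>J + e\<close> is independent in \<open>M\<close>, hence in \<open>N\<close>, and extends inside
  \<open>J + e \<union> B\<close> to a base \<open>Z\<close> of \<open>N\<close>, making \<open>(E - Z) \<union> (J + e)\<close> a strictly larger
  independent superset. Complementing in \<open>E\<close> turns \<open>(E - B) \<union> B\<^sub>M\<close> into \<open>B - B\<^sub>M\<close>.\<close>

lemma matroid_indep_subset_ground: "matroid E I \<Longrightarrow> X \<in> I \<Longrightarrow> X \<subseteq> E"
  unfolding matroid_def by blast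

lemma matroid_finite_ground: "matroid E I \<Longrightarrow> finite E"
  unfolding matroid_def by blast

lemma matroid_indep_finite: "matroid E I \<Longrightarrow> X \<in> I \<Longrightarrow> finite X"
  unfolding matroid_def by (meson finite_subset)

lemma matroid_indep_subset: "matroid E I \<Longrightarrow> X \<in> I \<Longrightarrow> Y \<subseteq> X \<Longrightarrow> Y \<in> I"
  unfolding matroid_def by blast

lemma matroid_augment:
  "matroid E I \<Longrightarrow> X \<in> I \<Longrightarrow> Y \<in> I \<Longrightarrow> card X < card Y \<Longrightarrow> \<exists>y\<in>Y - X. insert y X \<in> I"
  unfolding matroid_def by blast

lemma bases_indep: "B \<in> bases I \<Longrightarrow> B \<in> I"
  unfolding bases_def by blast

lemma bases_maximal: "B \<in> bases I \<Longrightarrow> X \<in> I \<Longrightarrow> B \<subseteq> X \<Longrightarrow> X = B"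
  unfolding bases_def by blast

lemma bases_if_card_maximal:
  assumes "X \<in> I" and "\<And>Y. Y \<in> I \<Longrightarrow> finite Y \<and> card Y \<le> card X"
  shows "X \<in> bases I"
  unfolding bases_def
proof (intro CollectI conjI ballI impI)
  show "X \<in> I" by fact
  fix Y assume "Y \<in> I" and "X \<subseteq> Y"
  then show "Y = X" using assms(2) card_seteq by blast
qed

lemma matroid_card_le_base:
  assumes m: "matroid E I" and B: "B \<in> bases I" and X: "X \<in> I"
  shows "card X \<le> card B"
proof (rule ccontr)
  assume "\<not> card X \<le> card B"
  then obtain y where "y \<in> X - B" "insert y B \<in> I"
    using matroid_augment[OF m bases_indep[OF B] X] by auto
  then show False using bases_maximal[OF B] by blast
qed

lemma matroid_bases_card_eq:
  "matroid E I \<Longrightarrow> B \<in> bases I \<Longrightarrow> B' \<in> bases I \<Longrightarrow> card B = card B'"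
  using matroid_card_le_base[of E I B B'] matroid_card_le_base[of E I B' B] bases_indep[of B I]
    bases_indep[of B' I]
  by simp

lemma matroid_base_if_card_ge:
  assumes m: "matroid E I" and B: "B \<in> bases I" and X: "X \<in> I" and "card B \<le> card X"
  shows "X \<in> bases I"
proof (rule bases_if_card_maximal[OF X])
  show "finite Y \<and> card Y \<le> card X" if "Y \<in> I" for Y
    using matroid_indep_finite[OF m that] matroid_card_le_base[OF m B that] assms(4) by simp
qed

lemma matroid_extend_to_base_within:
  assumes m: "matroid E I" and X: "X \<in> I" and B: "B \<in> bases I"
  shows "\<exists>Z\<in>bases I. X \<subseteq> Z \<and> Z \<subseteq> X \<union> B"
proof -
  let ?C = "{Z \<in> I. X \<subseteq> Z \<and> Z \<subseteq> X \<union> B}"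
  have "finite (X \<union> B)"
    using matroid_indep_finite[OF m X] matroid_indep_finite[OF m bases_indep[OF B]] by simp
  then have "finite ?C" by (rule finite_subset[rotated, OF finite_Pow_iff[THEN iffD2]]) blast
  moreover have "X \<in> ?C" using X by blast
  ultimately obtain Z where Z: "Z \<in> ?C" and Zmax: "\<forall>Z'\<in>?C. Z \<subseteq> Z' \<longrightarrow> Z = Z'"
    using finite_has_maximal2[of ?C X] by auto
  have "card B \<le> card Z"
  proof (rule ccontr)
    assume "\<not> card B \<le> card Z"
    then obtain y where y: "y \<in> B - Z" "insert y Z \<in> I"
      using matroid_augment[OF m _ bases_indep[OF B], of Z] Z by auto
    then have "insert y Z \<in> ?C" using Z by blast
    then have "Z = insert y Z" using Zmax by blast
    then show False using y by blast
  qed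
  then have "Z \<in> bases I" using matroid_base_if_card_ge[OF m B] Z by blast
  then show ?thesis using Z by blast
qed

lemma card_complement_Un:
  assumes "finite E" and "B \<subseteq> E" and "J \<subseteq> B"
  shows "card ((E - B) \<union> J) = card E - card B + card J"
proof -
  have "card ((E - B) \<union> J) = card (E - B) + card J"
    using assms by (intro card_Un_disjoint) (auto intro: finite_subset)
  then show ?thesis using assms by (simp add: card_Diff_subset finite_subset)
qed

lemma union_dual_indep_iff:
  "V \<in> union_indep (dual_indep E IN) IM \<longleftrightarrow>
   (\<exists>S T B. V = S \<union> T \<and> B \<in> bases IN \<and> S \<subseteq> E - B \<and> T \<in> IM)"
  unfolding union_indep_def dual_indep_def by blast

lemma union_dual_indep_complement_Un:
  "B \<in> bases IN \<Longrightarrow> J \<in> IM \<Longrightarrow> (E - B) \<union> J \<in> union_indep (dual_indep E IN) IM"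
  unfolding union_dual_indep_iff by blast

context
  fixes E :: "'a set" and IN IM :: "'a set set"
  assumes N: "matroid E IN" and M: "matroid E IM" and M_le_N: "IM \<subseteq> IN"
begin

lemma union_dual_indep_card_le:
  assumes V: "V \<in> union_indep (dual_indep E IN) IM"
    and B: "B \<in> bases IN" and BM: "BM \<in> bases IM"
  shows "finite V \<and> card V \<le> card E - card B + card BM"
proof -
  obtain S T B' where V_eq: "V = S \<union> T" and B': "B' \<in> bases IN" and S: "S \<subseteq> E - B'"
    and T: "T \<in> IM"
    using V unfolding union_dual_indep_iff by blast
  have B'E: "B' \<subseteq> E" using matroid_indep_subset_ground[OF N bases_indep[OF B']] .
  have fE: "finite E" using matroid_finite_ground[OF N] .
  have V_sub: "V \<subseteq> (E - B') \<union> (T \<inter> B')"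
    using V_eq S matroid_indep_subset_ground[OF M T] by blast
  have W_fin: "finite ((E - B') \<union> (T \<inter> B'))" using fE B'E by (auto intro: finite_subset)
  then have "finite V" using V_sub by (rule finite_subset[rotated])
  have "card V \<le> card ((E - B') \<union> (T \<inter> B'))" using card_mono[OF W_fin V_sub] .
  also have "\<dots> = card E - card B' + card (T \<inter> B')"
    using fE B'E by (intro card_complement_Un) auto
  also have "card B' = card B" using matroid_bases_card_eq[OF N B' B] .
  also have "card (T \<inter> B') \<le> card BM"
    using matroid_card_le_base[OF M BM matroid_indep_subset[OF M T]] by blast
  finally show ?thesis using \<open>finite V\<close> by simp
qed

lemma union_dual_base_of_nested_bases:
  assumes B: "B \<in> bases IN" and BM: "BM \<in> bases IM" and "BM \<subseteq> B"
  shows "(E - B) \<union> BM \<in> bases (union_indep (dual_indep E IN) IM)"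
proof (rule bases_if_card_maximal)
  show "(E - B) \<union> BM \<in> union_indep (dual_indep E IN) IM"
    using B BM bases_indep union_dual_indep_complement_Un by blast
  have "card ((E - B) \<union> BM) = card E - card B + card BM"
    using assms matroid_finite_ground[OF N] matroid_indep_subset_ground[OF N bases_indep[OF B]]
    by (intro card_complement_Un) auto
  then show "finite V \<and> card V \<le> card ((E - B) \<union> BM)"
    if "V \<in> union_indep (dual_indep E IN) IM" for V
    using union_dual_indep_card_le[OF that B BM] by simp
qed

lemma union_dual_base_component_is_base:
  assumes B: "B \<in> bases IN" and J: "J \<in> IM" and JB: "J \<subseteq> B"
    and U: "(E - B) \<union> J \<in> bases (union_indep (dual_indep E IN) IM)"
  shows "J \<in> bases IM"
proof (rule ccontr)
  assume "J \<notin> bases IM"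
  then obtain X where X: "X \<in> IM" "J \<subset> X" using J unfolding bases_def by blast
  then have "card J < card X" using matroid_indep_finite[OF M] by (meson psubset_card_mono)
  then obtain e where e: "e \<in> X - J" and eJ: "insert e J \<in> IM"
    using matroid_augment[OF M J X(1)] by blast
  obtain Z where Z: "Z \<in> bases IN" and eJZ: "insert e J \<subseteq> Z" and ZB: "Z \<subseteq> insert e J \<union> B"
    using matroid_extend_to_base_within[OF N _ B] eJ M_le_N by blast
  have fE: "finite E" using matroid_finite_ground[OF N] .
  have BE: "B \<subseteq> E" and ZE: "Z \<subseteq> E"
    using matroid_indep_subset_ground[OF N bases_indep] B Z by auto
  have "(E - B) \<union> J \<subseteq> (E - Z) \<union> insert e J" using ZB by blast
  moreover have "(E - Z) \<union> insert e J \<in> union_indep (dual_indep E IN) IM"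
    using Z eJ by (rule union_dual_indep_complement_Un)
  ultimately have "(E - Z) \<union> insert e J = (E - B) \<union> J"
    using bases_maximal[OF U] by blast
  moreover have "card Z = card B" using matroid_bases_card_eq[OF N Z B] .
  moreover have "finite J" using matroid_indep_finite[OF M J] .
  ultimately show False
    using card_complement_Un[OF fE ZE eJZ] card_complement_Un[OF fE BE JB] e by simp
qed

lemma union_dual_base_decomp:
  assumes U: "U \<in> bases (union_indep (dual_indep E IN) IM)"
  shows "\<exists>B\<in>bases IN. \<exists>J\<in>bases IM. J \<subseteq> B \<and> U = (E - B) \<union> J"
proof -
  obtain S T B where U_eq: "U = S \<union> T" and B: "B \<in> bases IN" and S: "S \<subseteq> E - B"
    and T: "T \<in> IM"
    using bases_indep[OF U] unfolding union_dual_indep_iff by blast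
  have TB: "T \<inter> B \<in> IM" using matroid_indep_subset[OF M T] by blast
  have "U \<subseteq> (E - B) \<union> (T \<inter> B)"
    using U_eq S matroid_indep_subset_ground[OF M T] by blast
  moreover have "(E - B) \<union> (T \<inter> B) \<in> union_indep (dual_indep E IN) IM"
    using B TB by (rule union_dual_indep_complement_Un)
  ultimately have U_eq': "U = (E - B) \<union> (T \<inter> B)"
    using bases_maximal[OF U] by blast
  have "T \<inter> B \<in> bases IM"
    using union_dual_base_component_is_base[OF B TB _ U[unfolded U_eq']] by blast
  moreover have "T \<inter> B \<subseteq> B" by blast
  ultimately show ?thesis using B U_eq' by blast
qed

end

theorem theorem3p4p2:
  fixes E :: "'a set" and IN IM :: "'a set set"
  assumes "matroid E IN" and "matroid E IM" and "IM \<subseteq> IN"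
  shows "ominus_indep IN IM = dual_indep E (union_indep (dual_indep E IN) IM)"
proof -
  have complement: "E - ((E - B) \<union> J) = B - J" if "B \<in> bases IN" for B J
    using matroid_indep_subset_ground[OF assms(1) bases_indep[OF that]] by blast
  show ?thesis
  proof (intro set_eqI iffI)
    fix S assume "S \<in> ominus_indep IN IM"
    then obtain B BM where B: "B \<in> bases IN" and BM: "BM \<in> bases IM" "BM \<subseteq> B"
      and "S \<subseteq> E - ((E - B) \<union> BM)" unfolding ominus_indep_def complement by blast
    moreover have "(E - B) \<union> BM \<in> bases (union_indep (dual_indep E IN) IM)"
      using union_dual_base_of_nested_bases[OF assms B BM] .
    ultimately show "S \<in> dual_indep E (union_indep (dual_indep E IN) IM)"
      unfolding dual_indep_def[of E "union_indep _ _"] by blast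
  next
    fix S assume "S \<in> dual_indep E (union_indep (dual_indep E IN) IM)"
    then obtain U where "U \<in> bases (union_indep (dual_indep E IN) IM)" and S: "S \<subseteq> E - U"
      unfolding dual_indep_def[of E "union_indep _ _"] by blast
    then obtain B J where B: "B \<in> bases IN" and J: "J \<in> bases IM" "J \<subseteq> B"
      and "U = (E - B) \<union> J"
      using union_dual_base_decomp[OF assms] by blast
    then have "S \<subseteq> B - J" using S complement[OF B] by simp
    then show "S \<in> ominus_indep IN IM"
      unfolding ominus_indep_def using B J by blast
  qed
qed

end
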